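(* Let $\tilde L$ be a minimum-size counterexample. Then every element $x\in\tilde L\setminus\{0_{\tilde L},1_{\tilde L}\}$ is incomparable with at least three elements of $\tilde L$.
   Context: For a poset $P$, $x$ upper covers $y$ if $y<x$ with nothing strictly between; join-irreducible: upper covers exactly one element. For $x\in P$, ${\uparrow}x=\{y: x\le y\}$. $0_{\tilde L}$, $1_{\tilde L}$ are the least and greatest elements. A counterexample is a finite lattice $L$ with $|L|>1$ in which every join-irreducible $j$ satisfies $|{\uparrow}j|>|L|/2$; a minimum-size counterexample is a counterexample $\tilde L$ such that no counterexample has fewer elements. *)

theory Defs
  imports Main
begin

definition is_lub :: "'a set \<Rightarrow> ('a \<Rightarrow> 'a \<Rightarrow> bool) \<Rightarrow> 'a \<Rightarrow> 'a \<Rightarrow> 'a \<Rightarrow> bool" where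
  "is_lub S le x y z \<longleftrightarrow> z \<in> S \<and> le x z \<and> le y z \<and>
     (\<forall>w\<in>S. le x w \<and> le y w \<longrightarrow> le z w)"

definition is_glb :: "'a set \<Rightarrow> ('a \<Rightarrow> 'a \<Rightarrow> bool) \<Rightarrow> 'a \<Rightarrow> 'a \<Rightarrow> 'a \<Rightarrow> bool" where
  "is_glb S le x y z \<longleftrightarrow> z \<in> S \<and> le z x \<and> le z y \<and>
     (\<forall>w\<in>S. le w x \<and> le w y \<longrightarrow> le w z)"

definition finite_lattice :: "'a set \<Rightarrow> ('a \<Rightarrow> 'a \<Rightarrow> bool) \<Rightarrow> bool" where
  "finite_lattice S le \<longleftrightarrow> finite S \<and> S \<noteq> {} \<and>
     (\<forall>x\<in>S. le x x) \<and>
     (\<forall>x\<in>S. \<forall>y\<in>S. le x y \<and> le y x \<longrightarrow> x = y) \<and>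
     (\<forall>x\<in>S. \<forall>y\<in>S. \<forall>z\<in>S. le x y \<and> le y z \<longrightarrow> le x z) \<and>
     (\<forall>x\<in>S. \<forall>y\<in>S. (\<exists>z. is_lub S le x y z) \<and> (\<exists>z. is_glb S le x y z))"

definition upper_covers :: "'a set \<Rightarrow> ('a \<Rightarrow> 'a \<Rightarrow> bool) \<Rightarrow> 'a \<Rightarrow> 'a \<Rightarrow> bool" where
  "upper_covers S le x y \<longleftrightarrow> x \<in> S \<and> y \<in> S \<and> le y x \<and> y \<noteq> x \<and>
     \<not> (\<exists>z\<in>S. le y z \<and> z \<noteq> y \<and> le z x \<and> z \<noteq> x)"

definition join_irreducible :: "'a set \<Rightarrow> ('a \<Rightarrow> 'a \<Rightarrow> bool) \<Rightarrow> 'a \<Rightarrow> bool" where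
  "join_irreducible S le j \<longleftrightarrow> j \<in> S \<and> card {y \<in> S. upper_covers S le j y} = 1"

definition up_set :: "'a set \<Rightarrow> ('a \<Rightarrow> 'a \<Rightarrow> bool) \<Rightarrow> 'a \<Rightarrow> 'a set" where
  "up_set S le x = {y \<in> S. le x y}"

definition counterexample :: "'a set \<Rightarrow> ('a \<Rightarrow> 'a \<Rightarrow> bool) \<Rightarrow> bool" where
  "counterexample S le \<longleftrightarrow> finite_lattice S le \<and> card S > 1 \<and>
     (\<forall>j\<in>S. join_irreducible S le j \<longrightarrow> 2 * card (up_set S le j) > card S)"

text \<open>Smaller counterexamples are quantified over
lattices carried by the same type; since such lattices have fewer elements than S,
every finite lattice of smaller size has an isomorphic copy on this type.\<close>
definition min_counterexample :: "'a set \<Rightarrow> ('a \<Rightarrow> 'a \<Rightarrow> bool) \<Rightarrow> bool" where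
  "min_counterexample S le \<longleftrightarrow> counterexample S le \<and>
     (\<forall>(S' :: 'a set) (le' :: 'a \<Rightarrow> 'a \<Rightarrow> bool). counterexample S' le' \<longrightarrow> card S \<le> card S')"

definition least_elem :: "'a set \<Rightarrow> ('a \<Rightarrow> 'a \<Rightarrow> bool) \<Rightarrow> 'a" where
  "least_elem S le = (THE z. z \<in> S \<and> (\<forall>y\<in>S. le z y))"

definition greatest_elem :: "'a set \<Rightarrow> ('a \<Rightarrow> 'a \<Rightarrow> bool) \<Rightarrow> 'a" where
  "greatest_elem S le = (THE z. z \<in> S \<and> (\<forall>y\<in>S. le y z))"

end

theory Submission imports Defs begin

text \<open>Suppose \<open>x \<notin> {0, 1}\<close> is incomparable with at most two elements. The interval \<open>\<up>x\<close> is
  a smaller lattice with at least two elements, so by minimality it has a join-irreducible \<open>j\<close>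
  with \<open>2 |\<up>j| \<le> |\<up>x| < |L|\<close>. Then \<open>j\<close> is not join-irreducible in \<open>L\<close>, so it has a second lower
  cover \<open>y\<close>, which is incomparable with \<open>x\<close> and satisfies \<open>j = x \<or> y\<close>. As \<open>\<down>x\<close>, \<open>\<up>x\<close> and the
  set \<open>I\<close> of elements incomparable with \<open>x\<close> cover \<open>L\<close> and overlap only in \<open>x\<close>, every \<open>u \<in> I\<close>
  with \<open>x \<or> u \<ge> j\<close> satisfies \<open>|\<up>u| \<le> |I \<inter> \<up>u| + |\<up>j|\<close>, and this forces \<open>2 |\<up>u| \<le> |L|\<close> unless
  \<open>\<down>x\<close> and \<open>I\<close> are large. A non-join-irreducible \<open>u \<in> I\<close> whose only other element of \<open>I\<close>
  below it is \<open>u'\<close> equals \<open>u' \<or> (x \<and> u)\<close>, which produces a third element \<open>x \<and> u\<close> of \<open>\<down>x\<close>.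
  Distinguishing whether \<open>y\<close> is join-irreducible, these facts yield a join-irreducible
  \<open>u \<in> {y, w}\<close> (\<open>w\<close> the other element of \<open>I\<close>) with \<open>2 |\<up>u| \<le> |L|\<close>, contradicting that \<open>L\<close> is a
  counterexample.\<close>

definition down_set :: "'a set \<Rightarrow> ('a \<Rightarrow> 'a \<Rightarrow> bool) \<Rightarrow> 'a \<Rightarrow> 'a set" where
  "down_set S le x = {y \<in> S. le y x}"

definition incomparables :: "'a set \<Rightarrow> ('a \<Rightarrow> 'a \<Rightarrow> bool) \<Rightarrow> 'a \<Rightarrow> 'a set" where
  "incomparables S le x = {y \<in> S. \<not> le x y \<and> \<not> le y x}"

lemma finite_lattice_dual:
  assumes "finite_lattice S le"
  shows "finite_lattice S (\<lambda>a b. le b a)"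
  using assms unfolding finite_lattice_def is_lub_def is_glb_def by blast

locale fin_lattice =
  fixes S :: "'a set" and le :: "'a \<Rightarrow> 'a \<Rightarrow> bool"
  assumes finite_lattice: "finite_lattice S le"
begin

lemma finite_carrier: "finite S"
  and carrier_nonempty: "S \<noteq> {}"
  and refl_le: "a \<in> S \<Longrightarrow> le a a"
  and antisym_le: "a \<in> S \<Longrightarrow> b \<in> S \<Longrightarrow> le a b \<Longrightarrow> le b a \<Longrightarrow> a = b"
  and trans_le: "a \<in> S \<Longrightarrow> b \<in> S \<Longrightarrow> c \<in> S \<Longrightarrow> le a b \<Longrightarrow> le b c \<Longrightarrow> le a c"
  using finite_lattice unfolding finite_lattice_def by blast+

definition join :: "'a \<Rightarrow> 'a \<Rightarrow> 'a" where
  "join a b = (SOME z. is_lub S le a b z)"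

definition meet :: "'a \<Rightarrow> 'a \<Rightarrow> 'a" where
  "meet a b = (SOME z. is_glb S le a b z)"

lemma is_lub_join: "a \<in> S \<Longrightarrow> b \<in> S \<Longrightarrow> is_lub S le a b (join a b)"
  using finite_lattice unfolding finite_lattice_def join_def by (blast intro: someI_ex)

lemma is_glb_meet: "a \<in> S \<Longrightarrow> b \<in> S \<Longrightarrow> is_glb S le a b (meet a b)"
  using finite_lattice unfolding finite_lattice_def meet_def by (blast intro: someI_ex)

lemma join_in: "a \<in> S \<Longrightarrow> b \<in> S \<Longrightarrow> join a b \<in> S"
  and join_upper1: "a \<in> S \<Longrightarrow> b \<in> S \<Longrightarrow> le a (join a b)"
  and join_upper2: "a \<in> S \<Longrightarrow> b \<in> S \<Longrightarrow> le b (join a b)"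
  and join_least: "a \<in> S \<Longrightarrow> b \<in> S \<Longrightarrow> c \<in> S \<Longrightarrow> le a c \<Longrightarrow> le b c \<Longrightarrow> le (join a b) c"
  using is_lub_join unfolding is_lub_def by blast+

lemma meet_in: "a \<in> S \<Longrightarrow> b \<in> S \<Longrightarrow> meet a b \<in> S"
  and meet_lower1: "a \<in> S \<Longrightarrow> b \<in> S \<Longrightarrow> le (meet a b) a"
  and meet_lower2: "a \<in> S \<Longrightarrow> b \<in> S \<Longrightarrow> le (meet a b) b"
  and meet_greatest: "a \<in> S \<Longrightarrow> b \<in> S \<Longrightarrow> c \<in> S \<Longrightarrow> le c a \<Longrightarrow> le c b \<Longrightarrow> le c (meet a b)"
  using is_glb_meet unfolding is_glb_def by blast+

lemma lower_bound_exists: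
  assumes "finite T" "T \<noteq> {}" "T \<subseteq> S"
  shows "\<exists>z\<in>S. \<forall>t\<in>T. le z t"
  using assms
proof (induction T rule: finite_ne_induct)
  case (singleton t)
  then show ?case using refl_le by auto
next
  case (insert t T)
  then obtain z where "z \<in> S" "\<forall>s\<in>T. le z s" by auto
  with insert.prems show ?case
    by (intro bexI[of _ "meet t z"]) (auto intro: trans_le meet_in meet_lower1 meet_lower2)
qed

lemma least_elem: "least_elem S le \<in> S" "a \<in> S \<Longrightarrow> le (least_elem S le) a"
proof -
  obtain z where z: "z \<in> S" "\<forall>a\<in>S. le z a"
    using lower_bound_exists[of S] finite_carrier carrier_nonempty by blast
  have "\<exists>!z. z \<in> S \<and> (\<forall>a\<in>S. le z a)"
    using z antisym_le by blast
  then have "least_elem S le \<in> S \<and> (\<forall>a\<in>S. le (least_elem S le) a)"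
    unfolding least_elem_def by (rule theI')
  then show "least_elem S le \<in> S" "a \<in> S \<Longrightarrow> le (least_elem S le) a" by blast+
qed

lemma greatest_elem: "greatest_elem S le \<in> S" "a \<in> S \<Longrightarrow> le a (greatest_elem S le)"
proof -
  interpret dual: fin_lattice S "\<lambda>a b. le b a"
    by unfold_locales (rule finite_lattice_dual[OF finite_lattice])
  have "greatest_elem S le = least_elem S (\<lambda>a b. le b a)"
    unfolding greatest_elem_def least_elem_def ..
  then show "greatest_elem S le \<in> S" "a \<in> S \<Longrightarrow> le a (greatest_elem S le)"
    using dual.least_elem by simp_all
qed

lemma up_set_subset: "up_set S le x \<subseteq> S"
  unfolding up_set_def by blast

lemma finite_lattice_up_set:
  assumes "x \<in> S"
  shows "finite_lattice (up_set S le x) le"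
proof -
  have lub: "is_lub (up_set S le x) le a b (join a b)"
    and glb: "is_glb (up_set S le x) le a b (meet a b)"
    if "a \<in> up_set S le x" "b \<in> up_set S le x" for a b
  proof -
    have ab: "a \<in> S" "b \<in> S" "le x a" "le x b"
      using that unfolding up_set_def by blast+
    have "le x (join a b)"
      using trans_le[OF assms ab(1) join_in[OF ab(1,2)] ab(3) join_upper1[OF ab(1,2)]] .
    then show "is_lub (up_set S le x) le a b (join a b)"
      using join_in[OF ab(1,2)] join_upper1[OF ab(1,2)] join_upper2[OF ab(1,2)]
        join_least[OF ab(1,2)]
      unfolding is_lub_def up_set_def by simp
    have "le x (meet a b)"
      using meet_greatest[OF ab(1,2) assms ab(3,4)] .
    then show "is_glb (up_set S le x) le a b (meet a b)"
      using meet_in[OF ab(1,2)] meet_lower1[OF ab(1,2)] meet_lower2[OF ab(1,2)]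
        meet_greatest[OF ab(1,2)]
      unfolding is_glb_def up_set_def by simp
  qed
  let ?B = "up_set S le x"
  have "finite ?B"
    using finite_subset[OF up_set_subset finite_carrier] .
  moreover have "?B \<noteq> {}"
    using assms refl_le unfolding up_set_def by blast
  moreover have "\<forall>a\<in>?B. le a a" "\<forall>a\<in>?B. \<forall>b\<in>?B. le a b \<and> le b a \<longrightarrow> a = b"
    "\<forall>a\<in>?B. \<forall>b\<in>?B. \<forall>c\<in>?B. le a b \<and> le b c \<longrightarrow> le a c"
    using up_set_subset refl_le antisym_le trans_le by (meson subsetD)+
  moreover have "\<forall>a\<in>?B. \<forall>b\<in>?B. (\<exists>z. is_lub ?B le a b z) \<and> (\<exists>z. is_glb ?B le a b z)"
    using lub glb by blast
  ultimately show ?thesis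
    unfolding finite_lattice_def by blast
qed

lemma up_set_up_set:
  assumes "x \<in> S" "j \<in> up_set S le x"
  shows "up_set (up_set S le x) le j = up_set S le j"
  using assms unfolding up_set_def by (auto intro: trans_le)

lemma card_down_up_incomparables:
  assumes "x \<in> S"
  shows "card (down_set S le x) + card (up_set S le x) + card (incomparables S le x) = card S + 1"
proof -
  let ?A = "down_set S le x" and ?B = "up_set S le x" and ?I = "incomparables S le x"
  have fin: "finite ?A" "finite ?B" "finite ?I"
    using finite_carrier unfolding down_set_def up_set_def incomparables_def by auto
  have "?A \<inter> ?B = {x}"
    using assms refl_le antisym_le unfolding down_set_def up_set_def by blast
  then have "card (?A \<union> ?B) + 1 = card ?A + card ?B"
    using card_Un_Int[OF fin(1,2)] by simp
  moreover have "card (?A \<union> ?B \<union> ?I) = card (?A \<union> ?B) + card ?I"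
    using fin by (intro card_Un_disjoint) (auto simp: down_set_def up_set_def incomparables_def)
  moreover have "?A \<union> ?B \<union> ?I = S"
    unfolding down_set_def up_set_def incomparables_def by blast
  ultimately show ?thesis by simp
qed

lemma join_irreducibleI:
  assumes "u \<in> S" "e \<in> S" "le e u" "e \<noteq> u"
    and below: "\<And>v. v \<in> S \<Longrightarrow> le v u \<Longrightarrow> v \<noteq> u \<Longrightarrow> le v e"
  shows "join_irreducible S le u"
proof -
  have "upper_covers S le u v \<longleftrightarrow> v = e" if "v \<in> S" for v
    using that assms antisym_le unfolding upper_covers_def by blast
  then have "{v \<in> S. upper_covers S le u v} = {e}"
    using \<open>e \<in> S\<close> by blast
  then show ?thesis
    unfolding join_irreducible_def using \<open>u \<in> S\<close> by simp
qed

lemma upper_covers_up_set: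
  assumes "x \<in> S" "j \<in> up_set S le x"
  shows "upper_covers (up_set S le x) le j c \<longleftrightarrow> upper_covers S le j c \<and> le x c"
proof
  have j: "j \<in> S" "le x j"
    using assms(2) unfolding up_set_def by blast+
  assume cover: "upper_covers (up_set S le x) le j c"
  then have c: "c \<in> S" "le x c"
    unfolding upper_covers_def up_set_def by blast+
  have "z \<in> up_set S le x" if "z \<in> S" "le c z" for z
    using trans_le[OF assms(1) c(1) that(1) c(2) that(2)] that(1) unfolding up_set_def by blast
  then show "upper_covers S le j c \<and> le x c"
    using cover c j unfolding upper_covers_def up_set_def by blast
next
  assume "upper_covers S le j c \<and> le x c"
  then show "upper_covers (up_set S le x) le j c"
    using assms(2) unfolding upper_covers_def up_set_def by blast
qed

lemma upper_covers_is_lub: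
  assumes "upper_covers S le j y" "x \<in> S" "le x j" "\<not> le x y"
  shows "is_lub S le x y j"
proof -
  have S: "j \<in> S" "y \<in> S" and yj: "le y j"
    using assms(1) unfolding upper_covers_def by blast+
  have "le y (join x y)" "le (join x y) j" "join x y \<noteq> y"
    using join_upper1[OF assms(2) S(2)] join_upper2[OF assms(2) S(2)]
      join_least[OF assms(2) S(2,1) assms(3) yj] assms(4) by auto
  then have "join x y = j"
    using assms(1) join_in[OF assms(2) S(2)] unfolding upper_covers_def by blast
  then show ?thesis
    using is_lub_join[OF assms(2) S(2)] by simp
qed

lemma incomparable_lower_cover:
  assumes x: "x \<in> S" and j: "j \<in> up_set S le x"
    and ji_up: "join_irreducible (up_set S le x) le j" and not_ji: "\<not> join_irreducible S le j"
  obtains y where "y \<in> incomparables S le x" "is_lub S le x y j"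
proof -
  have jS: "j \<in> S" and xj: "le x j"
    using j unfolding up_set_def by blast+
  obtain c where c: "{v \<in> up_set S le x. upper_covers (up_set S le x) le j v} = {c}"
    using ji_up card_1_singletonE unfolding join_irreducible_def by metis
  then have cover_c: "upper_covers S le j c" and xc: "le x c"
    using upper_covers_up_set[OF x j] by blast+
  then have cS: "c \<in> S"
    unfolding upper_covers_def by blast
  have "{v \<in> S. upper_covers S le j v} \<noteq> {c}"
    using not_ji jS unfolding join_irreducible_def by auto
  then obtain y where yS: "y \<in> S" and cover_y: "upper_covers S le j y" and yc: "y \<noteq> c"
    using cover_c cS by blast
  have not_xy: "\<not> le x y"
  proof
    assume "le x y"
    then have "y \<in> {v \<in> up_set S le x. upper_covers (up_set S le x) le j v}"
      using yS cover_y upper_covers_up_set[OF x j] unfolding up_set_def by blast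
    then show False
      using c yc by blast
  qed
  have "\<not> le y x"
  proof
    assume "le y x"
    then have "le y c"
      using trans_le[OF yS x cS _ xc] by blast
    then show False
      using cover_y cover_c cS yc unfolding upper_covers_def by blast
  qed
  with not_xy yS have "y \<in> incomparables S le x"
    unfolding incomparables_def by blast
  then show thesis
    using that upper_covers_is_lub[OF cover_y x xj not_xy] by blast
qed

lemma card_up_set_incomparable_le:
  assumes x: "x \<in> S" and u: "u \<in> incomparables S le x"
    and above_join: "\<And>v. v \<in> S \<Longrightarrow> le x v \<Longrightarrow> le u v \<Longrightarrow> le j v"
  shows "card (up_set S le u)
    \<le> card (incomparables S le x \<inter> up_set S le u) + card (up_set S le j)"
proof -
  have uS: "u \<in> S" and not_ux: "\<not> le u x"
    using u unfolding incomparables_def by blast+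
  have "v \<in> incomparables S le x" if "v \<in> S" "le u v" "\<not> le x v" for v
    using that trans_le[OF uS that(1) x that(2)] not_ux unfolding incomparables_def by blast
  then have "up_set S le u \<subseteq> (incomparables S le x \<inter> up_set S le u) \<union> up_set S le j"
    using above_join unfolding up_set_def by blast
  then have "card (up_set S le u) \<le> card ((incomparables S le x \<inter> up_set S le u) \<union> up_set S le j)"
    using finite_carrier by (intro card_mono) (auto simp: up_set_def)
  also have "\<dots> \<le> card (incomparables S le x \<inter> up_set S le u) + card (up_set S le j)"
    by (rule card_Un_le)
  finally show ?thesis .
qed

lemma join_irreducible_incomparableI:
  assumes x: "x \<in> S" and u: "u \<in> S" "\<not> le x u"
    and e: "e \<in> S" "le (meet x u) e" "le e u" "e \<noteq> u"
    and incomparables_below: "\<And>v. v \<in> incomparables S le x \<Longrightarrow> le v u \<Longrightarrow> v \<noteq> u \<Longrightarrow> le v e"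
  shows "join_irreducible S le u"
proof (rule join_irreducibleI[OF u(1) e(1,3,4)])
  fix v assume v: "v \<in> S" "le v u" "v \<noteq> u"
  consider "le v x" | "v \<in> incomparables S le x"
    using v trans_le[OF x v(1) u(1) _ v(2)] u(2) unfolding incomparables_def by blast
  then show "le v e"
  proof cases
    case 1
    show ?thesis
      using trans_le[OF v(1) meet_in[OF x u(1)] e(1) meet_greatest[OF x u(1) v(1) 1 v(2)] e(2)] .
  qed (use v incomparables_below in blast)
qed

lemma join_irreducible_if_no_incomparable_below:
  assumes x: "x \<in> S" and u: "u \<in> incomparables S le x"
    and minimal: "\<And>v. v \<in> incomparables S le x \<Longrightarrow> le v u \<Longrightarrow> v = u"
  shows "join_irreducible S le u"
proof -
  have uS: "u \<in> S" and not_xu: "\<not> le x u" and not_ux: "\<not> le u x"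
    using u unfolding incomparables_def by blast+
  have "meet x u \<noteq> u"
    using meet_lower1[OF x uS] not_ux by auto
  then show ?thesis
    using join_irreducible_incomparableI[OF x uS not_xu meet_in[OF x uS] refl_le[OF meet_in[OF x uS]]
        meet_lower2[OF x uS]] minimal by blast
qed

lemma join_meet_eq_if_not_join_irreducible:
  assumes x: "x \<in> S" and u: "u \<in> incomparables S le x" and u': "u' \<in> incomparables S le x" "le u' u"
    and pair: "\<And>v. v \<in> incomparables S le x \<Longrightarrow> v = u \<or> v = u'"
    and not_ji: "\<not> join_irreducible S le u"
  shows "join u' (meet x u) = u"
proof (rule ccontr)
  have uS: "u \<in> S" and u'S: "u' \<in> S" and not_xu: "\<not> le x u"
    using u u' unfolding incomparables_def by blast+
  let ?d = "meet x u"
  have dS: "?d \<in> S"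
    by (rule meet_in[OF x uS])
  assume "join u' ?d \<noteq> u"
  moreover have "le (join u' ?d) u"
    by (rule join_least[OF u'S dS uS u'(2) meet_lower2[OF x uS]])
  moreover have "le v (join u' ?d)" if "v \<in> incomparables S le x" "le v u" "v \<noteq> u" for v
    using pair[OF that(1)] that(3) join_upper1[OF u'S dS] by blast
  ultimately have "join_irreducible S le u"
    using join_irreducible_incomparableI[OF x uS not_xu join_in[OF u'S dS] join_upper2[OF u'S dS]]
    by blast
  with not_ji show False ..
qed

lemma three_le_card_down_set:
  assumes x: "x \<in> S" "x \<noteq> least_elem S le"
    and d: "d \<in> S" "le d x" "d \<noteq> least_elem S le" "d \<noteq> x"
  shows "3 \<le> card (down_set S le x)"
proof -
  have "{least_elem S le, d, x} \<subseteq> down_set S le x"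
    using x d least_elem refl_le unfolding down_set_def by blast
  then have "card {least_elem S le, d, x} \<le> card (down_set S le x)"
    using finite_carrier by (intro card_mono) (auto simp: down_set_def)
  then show ?thesis
    using x(2) d(3,4) by simp
qed

lemma three_le_card_down_set_if_not_join_irreducible:
  assumes x: "x \<in> S" "x \<noteq> least_elem S le"
    and u: "u \<in> incomparables S le x" and u': "u' \<in> incomparables S le x" "le u' u" "u' \<noteq> u"
    and pair: "\<And>v. v \<in> incomparables S le x \<Longrightarrow> v = u \<or> v = u'"
    and not_ji: "\<not> join_irreducible S le u"
  shows "3 \<le> card (down_set S le x)"
proof -
  have uS: "u \<in> S" and u'S: "u' \<in> S" and not_xu: "\<not> le x u"
    using u u' unfolding incomparables_def by blast+
  let ?d = "meet x u"
  have dS: "?d \<in> S"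
    by (rule meet_in[OF x(1) uS])
  have join_eq: "join u' ?d = u"
    by (rule join_meet_eq_if_not_join_irreducible[OF x(1) u u'(1,2) pair not_ji])
  have "\<not> le ?d u'"
  proof
    assume "le ?d u'"
    then have "le u u'"
      using join_least[OF u'S dS u'S refl_le[OF u'S]] join_eq by simp
    then show False
      using antisym_le[OF u'S uS u'(2)] u'(3) by blast
  qed
  then have "?d \<noteq> least_elem S le"
    using least_elem u'S by auto
  moreover have "?d \<noteq> x"
    using meet_lower2[OF x(1) uS] not_xu by auto
  ultimately show ?thesis
    using three_le_card_down_set[OF x dS meet_lower1[OF x(1) uS]] by blast
qed

lemma small_join_above:
  assumes x: "x \<in> S" "x \<noteq> greatest_elem S le"
    and smaller: "card (up_set S le x) < card S"
    and not_ce: "\<not> counterexample (up_set S le x) le"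
    and ji_large: "\<And>u. join_irreducible S le u \<Longrightarrow> card S < 2 * card (up_set S le u)"
  obtains y j where "y \<in> incomparables S le x" "is_lub S le x y j"
    "2 * card (up_set S le j) \<le> card (up_set S le x)"
proof -
  let ?B = "up_set S le x"
  have "{x, greatest_elem S le} \<subseteq> ?B"
    using x greatest_elem refl_le unfolding up_set_def by blast
  then have "card {x, greatest_elem S le} \<le> card ?B"
    by (rule card_mono[OF finite_subset[OF up_set_subset finite_carrier]])
  then have "1 < card ?B"
    using x(2) by simp
  then obtain j where j: "j \<in> ?B" "join_irreducible ?B le j"
    and small: "2 * card (up_set ?B le j) \<le> card ?B"
    using not_ce finite_lattice_up_set[OF x(1)] unfolding counterexample_def by auto
  have small_S: "2 * card (up_set S le j) \<le> card ?B"
    using small up_set_up_set[OF x(1) j(1)] by simp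
  have "\<not> join_irreducible S le j"
  proof
    assume "join_irreducible S le j"
    then show False
      using ji_large[of j] small_S smaller by linarith
  qed
  then obtain y where "y \<in> incomparables S le x" "is_lub S le x y j"
    using incomparable_lower_cover[OF x(1) j] by blast
  then show thesis
    using that small_S by blast
qed

end

locale incomparable_join = fin_lattice +
  fixes x y j :: 'a
  assumes x_in: "x \<in> S" and x_not_least: "x \<noteq> least_elem S le"
    and y_incomparable: "y \<in> incomparables S le x"
    and is_lub_xy: "is_lub S le x y j"
    and up_set_j_small: "2 * card (up_set S le j) \<le> card (up_set S le x)"
    and join_irreducible_up_set_large:
      "\<And>u. join_irreducible S le u \<Longrightarrow> card S < 2 * card (up_set S le u)"
begin

abbreviation Inc :: "'a set" where
  "Inc \<equiv> incomparables S le x"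

lemma finite_Inc: "finite Inc"
  using finite_carrier unfolding incomparables_def by simp

lemma y_in: "y \<in> S"
  using y_incomparable unfolding incomparables_def by blast

lemma le_j: "v \<in> S \<Longrightarrow> le x v \<Longrightarrow> le y v \<Longrightarrow> le j v"
  using is_lub_xy unfolding is_lub_def by blast

lemma not_join_irreducible_if_few_incomparables_above:
  assumes u: "u \<in> Inc" and above_join: "\<And>v. v \<in> S \<Longrightarrow> le x v \<Longrightarrow> le u v \<Longrightarrow> le j v"
    and few: "2 * card (Inc \<inter> up_set S le u) < card (down_set S le x) + card Inc"
  shows "\<not> join_irreducible S le u"
proof
  assume "join_irreducible S le u"
  then have "card S < 2 * card (up_set S le u)"
    by (rule join_irreducible_up_set_large)
  then show False
    using card_up_set_incomparable_le[OF x_in u above_join] card_down_up_incomparables[OF x_in]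
      up_set_j_small few by linarith
qed

lemma two_le_card_down_set: "2 \<le> card (down_set S le x)"
proof -
  have "{least_elem S le, x} \<subseteq> down_set S le x"
    using x_in least_elem refl_le unfolding down_set_def by blast
  then have "card {least_elem S le, x} \<le> card (down_set S le x)"
    using finite_carrier by (intro card_mono) (auto simp: down_set_def)
  then show ?thesis
    using x_not_least by simp
qed

lemma Inc_eq_pair:
  assumes "card Inc \<le> 2" "w \<in> Inc" "w \<noteq> y"
  shows "Inc = {y, w}"
  using card_seteq[OF finite_Inc, of "{y, w}"] assms y_incomparable by simp

lemma three_le_card_Inc_if_join_irreducible:
  assumes ji: "join_irreducible S le y"
  shows "3 \<le> card Inc"
proof (rule ccontr)
  assume "\<not> 3 \<le> card Inc"
  then have few: "card Inc \<le> 2" by simp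
  show False
  proof (cases "\<exists>w \<in> Inc. w \<noteq> y \<and> le y w")
    case False
    then have "Inc \<inter> up_set S le y \<subseteq> {y}"
      unfolding up_set_def by blast
    then have "card (Inc \<inter> up_set S le y) \<le> 1"
      using card_mono[of "{y}"] by fastforce
    moreover have "1 \<le> card Inc"
      using finite_Inc y_incomparable by (simp add: Suc_le_eq card_gt_0_iff) blast
    ultimately show False
      using not_join_irreducible_if_few_incomparables_above[OF y_incomparable le_j]
        two_le_card_down_set ji by linarith
  next
    case True
    then obtain w where w: "w \<in> Inc" "w \<noteq> y" "le y w" by blast
    have wS: "w \<in> S"
      using w(1) unfolding incomparables_def by blast
    have Inc: "Inc = {y, w}"
      by (rule Inc_eq_pair[OF few w(1,2)])
    then have card_Inc: "card Inc = 2"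
      using w(2) by simp
    have "card (Inc \<inter> up_set S le y) \<le> 2"
      using card_mono[OF finite_Inc, of "Inc \<inter> up_set S le y"] few by simp
    then have "card (down_set S le x) \<le> 2"
      using not_join_irreducible_if_few_incomparables_above[OF y_incomparable le_j] card_Inc ji
      by linarith
    then have ji_w: "join_irreducible S le w"
      using three_le_card_down_set_if_not_join_irreducible[OF x_in x_not_least w(1) y_incomparable
          w(3) w(2)[symmetric]] Inc by fastforce
    have "Inc \<inter> up_set S le w \<subseteq> {w}"
      using Inc antisym_le[OF y_in wS w(3)] w(2) unfolding up_set_def by auto
    then have "card (Inc \<inter> up_set S le w) \<le> 1"
      using card_mono[of "{w}"] by fastforce
    moreover have above_join: "le j v" if "v \<in> S" "le x v" "le w v" for v
      using le_j[OF that(1,2) trans_le[OF y_in wS that(1) w(3) that(3)]] .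
    ultimately show False
      using not_join_irreducible_if_few_incomparables_above[OF w(1) above_join]
        two_le_card_down_set card_Inc ji_w by linarith
  qed
qed

lemma three_le_card_Inc_if_not_join_irreducible:
  assumes not_ji: "\<not> join_irreducible S le y"
  shows "3 \<le> card Inc"
proof (rule ccontr)
  assume "\<not> 3 \<le> card Inc"
  then have few: "card Inc \<le> 2" by simp
  obtain w where w: "w \<in> Inc" "le w y" "w \<noteq> y"
    using join_irreducible_if_no_incomparable_below[OF x_in y_incomparable] not_ji by blast
  have wS: "w \<in> S"
    using w(1) unfolding incomparables_def by blast
  have Inc: "Inc = {y, w}"
    by (rule Inc_eq_pair[OF few w(1,3)])
  then have card_Inc: "card Inc = 2" and pair: "\<And>v. v \<in> Inc \<Longrightarrow> v = y \<or> v = w"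
    using w(3) by auto
  have ji_w: "join_irreducible S le w"
    using join_irreducible_if_no_incomparable_below[OF x_in w(1)] pair
      antisym_le[OF wS y_in w(2)] w(3) by blast
  have join_eq: "join w (meet x y) = y"
    by (rule join_meet_eq_if_not_join_irreducible[OF x_in y_incomparable w(1,2) pair not_ji])
  have above_join: "le j v" if v: "v \<in> S" "le x v" "le w v" for v
  proof -
    have "le (meet x y) v"
      using trans_le[OF meet_in[OF x_in y_in] x_in v(1) meet_lower1[OF x_in y_in] v(2)] .
    then have "le y v"
      using join_least[OF wS meet_in[OF x_in y_in] v(1) v(3)] join_eq by simp
    then show ?thesis
      using le_j[OF v(1,2)] by blast
  qed
  have "3 \<le> card (down_set S le x)"
    by (rule three_le_card_down_set_if_not_join_irreducible[OF x_in x_not_least y_incomparable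
          w(1,2,3) pair not_ji])
  moreover have "card (Inc \<inter> up_set S le w) \<le> 2"
    using card_mono[OF finite_Inc, of "Inc \<inter> up_set S le w"] few by simp
  ultimately show False
    using not_join_irreducible_if_few_incomparables_above[OF w(1) above_join] card_Inc ji_w
    by linarith
qed

lemma three_le_card_Inc: "3 \<le> card Inc"
  using three_le_card_Inc_if_join_irreducible three_le_card_Inc_if_not_join_irreducible by blast

end

theorem corollary2p14:
  fixes S :: "'a set" and le :: "'a \<Rightarrow> 'a \<Rightarrow> bool"
  assumes "min_counterexample S le"
  shows "\<forall>x \<in> S - {least_elem S le, greatest_elem S le}.
           card {y \<in> S. \<not> le x y \<and> \<not> le y x} \<ge> 3"
proof
  fix x assume x: "x \<in> S - {least_elem S le, greatest_elem S le}"
  have ce: "counterexample S le"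
    and minimal: "\<And>S' le'. counterexample (S' :: 'a set) le' \<Longrightarrow> card S \<le> card S'"
    using assms unfolding min_counterexample_def by blast+
  then interpret fin_lattice S le
    by unfold_locales (simp add: counterexample_def)
  have ji_large: "\<And>u. join_irreducible S le u \<Longrightarrow> card S < 2 * card (up_set S le u)"
    using ce unfolding counterexample_def join_irreducible_def by blast
  have "up_set S le x \<subset> S"
    using x least_elem antisym_le unfolding up_set_def by blast
  then have smaller: "card (up_set S le x) < card S"
    by (rule psubset_card_mono[OF finite_carrier])
  then have "\<not> counterexample (up_set S le x) le"
    using minimal by fastforce
  then obtain y j where "y \<in> incomparables S le x" "is_lub S le x y j"
    "2 * card (up_set S le j) \<le> card (up_set S le x)"
    using small_join_above[OF _ _ smaller _ ji_large] x by blast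
  then interpret incomparable_join S le x y j
    using x ji_large by unfold_locales blast+
  show "card {y \<in> S. \<not> le x y \<and> \<not> le y x} \<ge> 3"
    using three_le_card_Inc unfolding incomparables_def .
qed

end
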